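(* Let $\beta_1,\dots,\beta_p\in\mathbb{R}$, $\delta_1^2,\dots,\delta_p^2>0$, $\sigma^2>0$, $\nu>0$, and $\Sigma=\sigma^2\boldsymbol\beta\boldsymbol\beta^\top+\mathrm{diag}(\delta_1^2,\dots,\delta_p^2)$. Let $k_p$ be the number of strictly positive entries of the long-only minimum variance portfolio (the minimizer of $w^\top\Sigma w$ subject to $\sum_iw_i=1$, $w_i\ge0$). Define $$G_p(y)=\frac{\nu^2}{p\sigma^2}+\frac{\nu^2}{p}\sum_{j=1}^p\frac{\beta_j}{\delta_j^2}(\beta_j-y)\mathbf{1}_{\{\beta_j\le y\}}.$$ Suppose $\frac1p\sum_{i=1}^p\beta_i/\delta_i^2>0$ and $G_p$ has a unique zero $\beta^*(p)\in(0,\infty)$. Then $$k_p=\sum_{i=1}^p\mathbf{1}_{\{\beta_i<\beta^*(p)\}},$$ i.e. $k_p/p=F_p(\beta^*(p)^-)$, where $F_p$ is the empirical cdf of $\beta_1,\dots,\beta_p$ and $F_p(t^-)$ denotes its left limit at $t$.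
   Context: In the paper $\nu$ is defined by $1/\nu^2=\mathbb{E}[1/\delta^2]$ for the distribution from which the $\delta_j^2$ are drawn; only $\nu>0$ matters here. *)

theory Defs
  imports Complex_Main
begin

text \<open>Indices are 0,...,p-1. Sigma = sigma2 * beta beta^T + diag(delta2).\<close>

definition Sigma_mat :: "real \<Rightarrow> (nat \<Rightarrow> real) \<Rightarrow> (nat \<Rightarrow> real) \<Rightarrow> nat \<Rightarrow> nat \<Rightarrow> real" where
  "Sigma_mat sigma2 beta delta2 i j =
     sigma2 * beta i * beta j + (if i = j then delta2 i else 0)"

definition port_var :: "nat \<Rightarrow> real \<Rightarrow> (nat \<Rightarrow> real) \<Rightarrow> (nat \<Rightarrow> real) \<Rightarrow> (nat \<Rightarrow> real) \<Rightarrow> real" where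
  "port_var p sigma2 beta delta2 w =
     (\<Sum>i<p. \<Sum>j<p. w i * Sigma_mat sigma2 beta delta2 i j * w j)"

definition long_only :: "nat \<Rightarrow> (nat \<Rightarrow> real) \<Rightarrow> bool" where
  "long_only p w \<longleftrightarrow> (\<Sum>i<p. w i) = 1 \<and> (\<forall>i<p. w i \<ge> 0)"

definition is_lo_minvar :: "nat \<Rightarrow> real \<Rightarrow> (nat \<Rightarrow> real) \<Rightarrow> (nat \<Rightarrow> real) \<Rightarrow> (nat \<Rightarrow> real) \<Rightarrow> bool" where
  "is_lo_minvar p sigma2 beta delta2 w \<longleftrightarrow>
     long_only p w \<and>
     (\<forall>v. long_only p v \<longrightarrow> port_var p sigma2 beta delta2 w \<le> port_var p sigma2 beta delta2 v)"

definition G_p :: "nat \<Rightarrow> real \<Rightarrow> real \<Rightarrow> (nat \<Rightarrow> real) \<Rightarrow> (nat \<Rightarrow> real) \<Rightarrow> real \<Rightarrow> real" where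
  "G_p p nu sigma2 beta delta2 y =
     nu^2 / (real p * sigma2) +
     nu^2 / real p * (\<Sum>j<p. beta j / delta2 j * (beta j - y) * (if beta j \<le> y then 1 else 0))"

end

theory Submission
  imports Defs
begin

text \<open>The minimiser is found by guessing it: if \<open>\<beta>\<^sup>*\<close> is a zero of \<open>G\<^sub>p\<close>, the portfolio with weights
  proportional to \<open>(\<beta>\<^sup>* - \<beta>\<^sub>i)\<^sup>+ / \<delta>\<^sub>i\<^sup>2\<close> satisfies the KKT conditions of the long-only problem,
  with \<open>(\<Sigma>w)\<^sub>i\<close> proportional to \<open>max \<beta>\<^sub>i \<beta>\<^sup>*\<close>.  At a KKT point \<open>u\<close> the variance of any long-only
  \<open>v\<close> exceeds that of \<open>u\<close> by at least \<open>\<Sum>\<^sub>i \<delta>\<^sub>i\<^sup>2 (v\<^sub>i - u\<^sub>i)\<^sup>2\<close>, so \<open>u\<close> is the unique minimiser,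
  and its support is \<open>{i. \<beta>\<^sub>i < \<beta>\<^sup>*}\<close>.\<close>

lemma port_var_eq:
  "port_var p s beta d x = s * (\<Sum>i<p. beta i * x i)^2 + (\<Sum>i<p. d i * (x i)^2)"
proof -
  have "s * (\<Sum>i<p. beta i * x i)^2 = s * (\<Sum>i<p. \<Sum>j<p. (beta i * x i) * (beta j * x j))"
    by (simp add: power2_eq_square sum_product)
  also have "\<dots> = (\<Sum>i<p. \<Sum>j<p. s * (beta i * x i) * (beta j * x j))"
    by (simp add: sum_distrib_left mult.assoc)
  finally have factor: "(\<Sum>i<p. \<Sum>j<p. s * (beta i * x i) * (beta j * x j)) = s * (\<Sum>i<p. beta i * x i)^2"
    by simp
  have diagonal: "(\<Sum>i<p. \<Sum>j<p. (if i = j then d i * x i * x j else 0)) = (\<Sum>i<p. d i * (x i)^2)"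
    by (simp add: power2_eq_square mult.assoc)
  have "port_var p s beta d x =
     (\<Sum>i<p. \<Sum>j<p. s * (beta i * x i) * (beta j * x j)) +
     (\<Sum>i<p. \<Sum>j<p. (if i = j then d i * x i * x j else 0))"
    unfolding port_var_def Sigma_mat_def sum.distrib[symmetric]
    by (intro sum.cong refl) (auto simp: algebra_simps)
  then show ?thesis by (simp only: factor diagonal)
qed

definition Sigma_mulv :: "nat \<Rightarrow> real \<Rightarrow> (nat \<Rightarrow> real) \<Rightarrow> (nat \<Rightarrow> real) \<Rightarrow> (nat \<Rightarrow> real) \<Rightarrow> nat \<Rightarrow> real" where
  "Sigma_mulv p s beta d u i = (\<Sum>j<p. Sigma_mat s beta d i j * u j)"

lemma Sigma_mulv_eq:
  assumes "i < p"
  shows "Sigma_mulv p s beta d u i = s * (\<Sum>j<p. beta j * u j) * beta i + d i * u i"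
proof -
  have "Sigma_mulv p s beta d u i =
      (\<Sum>j<p. s * beta i * beta j * u j) + (\<Sum>j<p. if i = j then d i * u j else 0)"
    unfolding Sigma_mulv_def Sigma_mat_def sum.distrib[symmetric]
    by (intro sum.cong refl) (simp add: algebra_simps)
  then show ?thesis
    using assms by (simp add: sum_distrib_left algebra_simps)
qed

definition is_lo_kkt_point :: "nat \<Rightarrow> real \<Rightarrow> (nat \<Rightarrow> real) \<Rightarrow> (nat \<Rightarrow> real) \<Rightarrow> real \<Rightarrow> (nat \<Rightarrow> real) \<Rightarrow> bool" where
  "is_lo_kkt_point p s beta d c u \<longleftrightarrow>
     long_only p u \<and>
     (\<forall>i<p. c \<le> Sigma_mulv p s beta d u i) \<and>
     (\<forall>i<p. 0 < u i \<longrightarrow> Sigma_mulv p s beta d u i = c)"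

lemma port_var_ge_at_kkt_point:
  assumes s: "s \<ge> 0"
    and kkt: "is_lo_kkt_point p s beta d c u"
    and v: "long_only p v"
  shows "port_var p s beta d u + (\<Sum>i<p. d i * (v i - u i)^2) \<le> port_var p s beta d v"
proof -
  define g where "g = Sigma_mulv p s beta d u"
  define Bu where "Bu = (\<Sum>i<p. beta i * u i)"
  define Bv where "Bv = (\<Sum>i<p. beta i * v i)"
  define E where "E = (\<Sum>i<p. d i * u i * (v i - u i)) + s * Bu * (Bv - Bu)"
  have u: "long_only p u" using kkt by (simp add: is_lo_kkt_point_def)
  have "0 \<le> (\<Sum>i<p. (v i - u i) * (g i - c))"
  proof (rule sum_nonneg)
    fix i assume "i \<in> {..<p}"
    then show "0 \<le> (v i - u i) * (g i - c)"
      using kkt v by (cases "0 < u i") (auto simp: is_lo_kkt_point_def long_only_def g_def)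
  qed
  also have "\<dots> = (\<Sum>i<p. (v i - u i) * g i) - c * (\<Sum>i<p. v i - u i)"
    unfolding sum_distrib_left sum_subtractf[symmetric] by (intro sum.cong refl) (simp add: algebra_simps)
  also have "(\<Sum>i<p. v i - u i) = 0"
    using u v by (simp add: sum_subtractf long_only_def)
  also have "(\<Sum>i<p. (v i - u i) * g i) = (\<Sum>i<p. d i * u i * (v i - u i)) + s * Bu * (Bv - Bu)"
    by (simp add: g_def Sigma_mulv_eq Bu_def Bv_def sum_distrib_left sum.distrib[symmetric]
        sum_subtractf[symmetric] algebra_simps)
  finally have first_order: "0 \<le> E"
    by (simp add: E_def)
  have "(\<Sum>i<p. d i * (v i)^2) = (\<Sum>i<p. d i * (u i)^2) + (\<Sum>i<p. d i * (v i - u i)^2)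
      + 2 * (\<Sum>i<p. d i * u i * (v i - u i))"
    by (simp add: sum_distrib_left sum.distrib[symmetric] power2_eq_square algebra_simps)
  then have "port_var p s beta d v
      = port_var p s beta d u + (\<Sum>i<p. d i * (v i - u i)^2) + s * (Bv - Bu)^2 + 2 * E"
    unfolding port_var_eq Bu_def[symmetric] Bv_def[symmetric] E_def
    by (simp add: power2_eq_square algebra_simps)
  moreover have "0 \<le> s * (Bv - Bu)^2" using s by simp
  ultimately show ?thesis using first_order by linarith
qed

lemma lo_minvar_eq_kkt_point:
  assumes s: "s \<ge> 0"
    and d: "\<forall>i<p. d i > 0"
    and kkt: "is_lo_kkt_point p s beta d c u"
    and w: "is_lo_minvar p s beta d w"
    and i: "i < p"
  shows "w i = u i"
proof -
  have "long_only p u" using kkt by (simp add: is_lo_kkt_point_def)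
  then have w_lo: "long_only p w" and "port_var p s beta d w \<le> port_var p s beta d u"
    using w unfolding is_lo_minvar_def by blast+
  moreover have "port_var p s beta d u + (\<Sum>j<p. d j * (w j - u j)^2) \<le> port_var p s beta d w"
    using port_var_ge_at_kkt_point[OF s kkt w_lo] .
  ultimately have "(\<Sum>j<p. d j * (w j - u j)^2) \<le> 0" by linarith
  moreover have nonneg: "\<forall>j\<in>{..<p}. 0 \<le> d j * (w j - u j)^2"
    using d by (simp add: less_imp_le)
  ultimately have "(\<Sum>j<p. d j * (w j - u j)^2) = 0"
    by (meson antisym sum_nonneg)
  then have "\<forall>j\<in>{..<p}. d j * (w j - u j)^2 = 0"
    using nonneg by (subst sum_nonneg_eq_0_iff[symmetric]) auto
  then have "d i * (w i - u i)^2 = 0" using i by simp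
  moreover have "d i > 0" using d i by simp
  ultimately show ?thesis by simp
qed

definition lo_weight :: "real \<Rightarrow> (nat \<Rightarrow> real) \<Rightarrow> (nat \<Rightarrow> real) \<Rightarrow> nat \<Rightarrow> real" where
  "lo_weight y beta d i = max 0 (y - beta i) / d i"

lemma lo_weight_pos_iff:
  assumes "d i > 0"
  shows "0 < lo_weight y beta d i \<longleftrightarrow> beta i < y"
  using assms by (auto simp: lo_weight_def zero_less_divide_iff)

lemma G_p_eq_0_iff:
  assumes "p > 0" and "nu \<noteq> 0"
  shows "G_p p nu s beta d y = 0 \<longleftrightarrow> (\<Sum>i<p. beta i * lo_weight y beta d i) = 1 / s"
proof -
  have "(\<Sum>j<p. beta j / d j * (beta j - y) * (if beta j \<le> y then 1 else 0))
      = - (\<Sum>i<p. beta i * lo_weight y beta d i)"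
    unfolding sum_negf[symmetric]
  proof (intro sum.cong refl)
    fix j
    show "beta j / d j * (beta j - y) * (if beta j \<le> y then 1 else 0) = - (beta j * lo_weight y beta d j)"
      by (cases "beta j \<le> y") (auto simp: lo_weight_def max_def minus_divide_left algebra_simps)
  qed
  then have "G_p p nu s beta d y = nu^2 / real p * (1 / s - (\<Sum>i<p. beta i * lo_weight y beta d i))"
    by (simp add: G_p_def right_diff_distrib)
  then show ?thesis using assms by auto
qed

lemma normalized_lo_weight_is_kkt_point:
  assumes d: "\<forall>i<p. d i > 0"
    and s: "s > 0"
    and budget: "(\<Sum>i<p. beta i * lo_weight y beta d i) = 1 / s"
  defines "S \<equiv> (\<Sum>i<p. lo_weight y beta d i)"
  shows "S > 0"
    and "is_lo_kkt_point p s beta d (y / S) (\<lambda>i. lo_weight y beta d i / S)"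
proof -
  have nonneg: "\<forall>i<p. 0 \<le> lo_weight y beta d i"
    using d by (auto simp: lo_weight_def intro: divide_nonneg_pos)
  show S_pos: "S > 0"
  proof (rule ccontr)
    assume "\<not> S > 0"
    moreover have "S \<ge> 0" using nonneg by (auto simp: S_def intro: sum_nonneg)
    ultimately have "\<forall>i\<in>{..<p}. lo_weight y beta d i = 0"
      using nonneg sum_nonneg_eq_0_iff[of "{..<p}" "lo_weight y beta d"] by (simp add: S_def)
    then show False using budget s by simp
  qed
  define u where "u i = lo_weight y beta d i / S" for i
  have "(\<Sum>i<p. beta i * u i) = (\<Sum>i<p. beta i * lo_weight y beta d i) / S"
    by (simp add: u_def sum_divide_distrib)
  then have Bu: "(\<Sum>i<p. beta i * u i) = 1 / (s * S)"
    using budget by simp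
  have mulv: "Sigma_mulv p s beta d u i = max (beta i) y / S" if i: "i < p" for i
  proof -
    have "Sigma_mulv p s beta d u i = s * (1 / (s * S)) * beta i + d i * u i"
      using i by (simp add: Sigma_mulv_eq Bu)
    also have "\<dots> = max (beta i) y / S"
      using d[rule_format, OF i] s S_pos by (simp add: u_def lo_weight_def max_def field_simps)
    finally show ?thesis .
  qed
  have "long_only p u"
    using S_pos nonneg by (simp add: long_only_def u_def S_def sum_divide_distrib[symmetric])
  moreover have "\<forall>i<p. 0 < u i \<longrightarrow> beta i < y"
    using d S_pos by (simp add: u_def lo_weight_pos_iff zero_less_divide_iff)
  ultimately show "is_lo_kkt_point p s beta d (y / S) u"
    using S_pos by (auto simp: is_lo_kkt_point_def mulv divide_right_mono)
qed

theorem lemma4: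
  fixes p :: nat and beta delta2 w :: "nat \<Rightarrow> real"
    and sigma2 nu bstar :: real
  assumes delta_pos: "\<forall>i<p. delta2 i > 0"
    and sigma_pos: "sigma2 > 0"
    and nu_pos: "nu > 0"
    and mean_pos: "(1 / real p) * (\<Sum>i<p. beta i / delta2 i) > 0"
    and bstar_pos: "bstar > 0"
    and bstar_zero: "G_p p nu sigma2 beta delta2 bstar = 0"
    and bstar_unique: "\<forall>y>0. G_p p nu sigma2 beta delta2 y = 0 \<longrightarrow> y = bstar"
    and w_min: "is_lo_minvar p sigma2 beta delta2 w"
  shows "card {i. i < p \<and> w i > 0} = card {i. i < p \<and> beta i < bstar}"
proof -
  define S where "S = (\<Sum>i<p. lo_weight bstar beta delta2 i)"
  have "p > 0" using mean_pos by (cases p) auto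
  then have budget: "(\<Sum>i<p. beta i * lo_weight bstar beta delta2 i) = 1 / sigma2"
    using bstar_zero nu_pos G_p_eq_0_iff by auto
  note candidate = normalized_lo_weight_is_kkt_point[OF delta_pos sigma_pos budget, folded S_def]
  have "w i = lo_weight bstar beta delta2 i / S" if "i < p" for i
    using lo_minvar_eq_kkt_point[OF _ delta_pos candidate(2) w_min that] sigma_pos by simp
  then have "{i. i < p \<and> w i > 0} = {i. i < p \<and> beta i < bstar}"
    using candidate(1) delta_pos by (auto simp: zero_less_divide_iff lo_weight_pos_iff)
  then show ?thesis by simp
qed

end
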